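(* Let $n\geqslant 1$ and $0\leqslant d\leqslant n-1$ be integers. Then, modulo $\Phi_n(q)$, \[ \sum_{k=0}^{n-1}q^k\begin{bmatrix}2k\\ k+d\end{bmatrix}(-q^{k+1};q)_{n-1-k} \equiv\begin{cases} 0&\text{if }n\equiv d\pmod{2},\\ q^{3(n-1)^2/4-3d^2/4-1} &\text{if }n\equiv d+1\pmod{4},\\ -q^{3(n-1)^2/4-3d^2/4-1} &\text{if }n\equiv d-1\pmod{4}, \end{cases} \] and \[ \sum_{k=0}^{n-1}q^k\begin{bmatrix}2k\\ k+d\end{bmatrix}(-q^{k+1};q)_{n-1-k}^2 \equiv \sum_{k=d+1}^{n}q^{\binom{n}{2}+\binom{k}{2}-d^2}\pmod{\Phi_n(q)}. \]
   Context: Here $q$ is an indeterminate. For $n\geq 1$, $(x;q)_n=(1-x)(1-xq)\cdots(1-xq^{n-1})$ and $(x;q)_0=1$. The $q$-binomial coefficient is $\begin{bmatrix}n\\ k\end{bmatrix}=\frac{(q;q)_n}{(q;q)_k(q;q)_{n-k}}$ if $0\leqslant k\leqslant n$ and $0$ otherwise. $\Phi_n(q)=\prod_{1\le k\le n,\ \gcd(n,k)=1}(q-e^{2\pi i k/n})$ is the $n$-th cyclotomic polynomial. Congruences modulo $\Phi_n(q)$ are between rational functions in $q$ (possibly with negative powers of $q$) whose denominators are coprime to $\Phi_n(q)$: $A\equiv B$ means $A-B$ is such a rational function times $\Phi_n(q)$. *)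

theory Defs
  imports "HOL-Analysis.Analysis" "HOL-Computational_Algebra.Polynomial" "HOL-Computational_Algebra.Fraction_Field"
begin

type_synonym ratfun = "complex poly fract"

definition qvar :: ratfun where
  "qvar = Fract [:0, 1:] 1"

definition qpoch :: "ratfun \<Rightarrow> nat \<Rightarrow> ratfun" where
  "qpoch x m = (\<Prod>j<m. 1 - x * qvar ^ j)"

definition qbinom :: "nat \<Rightarrow> nat \<Rightarrow> ratfun" where
  "qbinom n k = (if k \<le> n then qpoch qvar n / (qpoch qvar k * qpoch qvar (n - k)) else 0)"

definition cyclotomic :: "nat \<Rightarrow> complex poly" where
  "cyclotomic n = (\<Prod>k\<in>{k\<in>{1..n}. coprime k n}. [:- cis (2 * pi * real k / real n), 1:])"

definition cyc_cong :: "nat \<Rightarrow> ratfun \<Rightarrow> ratfun \<Rightarrow> bool" where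
  "cyc_cong n A B \<longleftrightarrow>
     (\<exists>p s. s \<noteq> 0 \<and> coprime s (cyclotomic n) \<and> A - B = Fract p s * Fract (cyclotomic n) 1)"

end

(*
  Write S_e(n, d) = (SUM k < n. q^k [2k, k+d] (-q^(k+1); q)_(n-1-k)^e) and
  V(n, d) = q^d [2n-1, n+d] + q^(2d+1) [2n-1, n+d+1].  Induction on n gives the exact identities
    S_1(n, d) + q^(3d+3) S_1(n, d+2) = V(n, d),
    S_2(n, d) - q^d (1 + q^(d+1)) S_2(n, d+1) + q^(3d+3) S_2(n, d+2) = V(n, d),
  and the q-binomial recurrences give
    (1 - q^(n+d+1)) V(n, d) = q^d (1 + q^(d+1)) (1 - q^n) [2n-1, n+d].
  For d <= n - 2 the factor 1 - q^(n+d+1) is invertible modulo Phi_n while q^n = 1 modulo Phi_n,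
  so V(n, d) vanishes and both sums satisfy three-term recurrences in d modulo Phi_n.  The claimed
  right-hand sides satisfy the same recurrences exactly and agree with the sums at d = n and
  d = n - 1, so downward induction on d proves both congruences.
*)

theory Submission
  imports
    Defs
    "HOL-Computational_Algebra.Polynomial_Factorial"
    "HOL-Computational_Algebra.Field_as_Ring"
begin

section \<open>The indeterminate and q-binomial coefficients\<close>

lemma power_mult_power_eq:
  fixes x :: "'a::monoid_mult"
  shows "a + b = c \<Longrightarrow> x ^ a * x ^ b = x ^ c"
  by (simp flip: power_add)

lemma qvar_power_Fract: "qvar ^ j = Fract ([:0, 1:] ^ j) 1"
  by (induct j) (simp_all add: qvar_def One_fract_def)

lemma Fract_one_minus_x_power: "Fract (1 - [:0, 1:] ^ m) 1 = 1 - qvar ^ m"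
  by (simp add: qvar_power_Fract One_fract_def)

lemma qvar_nonzero [simp]: "qvar \<noteq> 0"
  by (simp add: qvar_def Zero_fract_def eq_fract)

lemma qvar_powi_add: "qvar powi (a + b) = qvar powi a * qvar powi b"
  by (simp add: power_int_add)

lemma qvar_power_eq_1_iff [simp]: "qvar ^ j = 1 \<longleftrightarrow> j = 0"
proof
  assume "qvar ^ j = 1"
  then have "([:0, 1:] :: complex poly) ^ j = 1"
    by (simp add: qvar_power_Fract One_fract_def eq_fract)
  then have "degree (([:0, 1:] :: complex poly) ^ j) = 0"
    by simp
  then show "j = 0"
    by (simp add: degree_power_eq)
qed simp

lemma one_minus_x_power_eq_0_iff: "(1 - [:0, 1:] ^ m :: complex poly) = 0 \<longleftrightarrow> m = 0"
proof
  assume "1 - [:0, 1:] ^ m = (0 :: complex poly)"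
  then have "1 - qvar ^ m = 0"
    by (metis Fract_one_minus_x_power Zero_fract_def)
  then show "m = 0"
    by simp
qed simp

lemma qpoch_0 [simp]: "qpoch x 0 = 1"
  by (simp add: qpoch_def)

lemma qpoch_Suc: "qpoch x (Suc m) = qpoch x m * (1 - x * qvar ^ m)"
  by (simp add: qpoch_def)

lemma qpoch_qvar_nonzero [simp]: "qpoch qvar m \<noteq> 0"
  by (induct m) (simp_all add: qpoch_Suc flip: power_Suc)

lemma qbinom_eq_0: "N < k \<Longrightarrow> qbinom N k = 0"
  by (simp add: qbinom_def)

lemma qbinom_n_0 [simp]: "qbinom N 0 = 1"
  by (simp add: qbinom_def)

lemma qbinom_n_n [simp]: "qbinom N N = 1"
  by (simp add: qbinom_def)

lemma qbinom_Suc_right: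
  "(1 - qvar ^ Suc k) * qbinom N (Suc k) = (1 - qvar ^ (N - k)) * qbinom N k"
proof (cases "k < N")
  case True
  then obtain r where r: "N - k = Suc r" "N - Suc k = r"
    by (metis Suc_diff_Suc)
  have nonzero: "1 - qvar ^ Suc r \<noteq> 0" "1 - qvar ^ Suc k \<noteq> 0"
    by (simp_all del: power_Suc)
  have "(1 - qvar ^ Suc k) * qbinom N (Suc k)
      = (1 - qvar ^ Suc k) * (qpoch qvar N / (qpoch qvar k * (1 - qvar ^ Suc k) * qpoch qvar r))"
    using True r by (simp only: qbinom_def qpoch_Suc Suc_leI if_True mult_1_left flip: power_Suc)
  also have "\<dots> = (1 - qvar ^ Suc r)
      * (qpoch qvar N / (qpoch qvar k * (qpoch qvar r * (1 - qvar ^ Suc r))))"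
    using nonzero by (simp add: field_simps del: power_Suc)
  also have "\<dots> = (1 - qvar ^ (N - k)) * qbinom N k"
    using True r
    by (simp only: qbinom_def qpoch_Suc less_imp_le if_True mult_1_left flip: power_Suc)
  finally show ?thesis .
next
  case False
  then show ?thesis
    by (simp add: qbinom_eq_0)
qed

lemma qbinom_absorption:
  "(1 - qvar ^ Suc k) * qbinom (Suc N) (Suc k) = (1 - qvar ^ Suc N) * qbinom N k"
proof (cases "k \<le> N")
  case True
  have nonzero: "1 - qvar ^ Suc k \<noteq> 0"
    by (simp del: power_Suc)
  have "(1 - qvar ^ Suc k) * qbinom (Suc N) (Suc k)
      = (1 - qvar ^ Suc k) * (qpoch qvar N * (1 - qvar ^ Suc N)
          / (qpoch qvar k * (1 - qvar ^ Suc k) * qpoch qvar (N - k)))"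
    using True
    by (simp only: qbinom_def qpoch_Suc Suc_le_mono diff_Suc_Suc if_True mult_1_left flip: power_Suc)
  also have "\<dots> = (1 - qvar ^ Suc N) * (qpoch qvar N / (qpoch qvar k * qpoch qvar (N - k)))"
    using nonzero by (simp add: field_simps del: power_Suc)
  also have "\<dots> = (1 - qvar ^ Suc N) * qbinom N k"
    using True by (simp add: qbinom_def)
  finally show ?thesis .
next
  case False
  then show ?thesis
    by (simp add: qbinom_eq_0)
qed

lemma qbinom_Suc_Suc:
  "qbinom (Suc N) (Suc k) = qbinom N k + qvar ^ Suc k * qbinom N (Suc k)"
proof (cases "k \<le> N")
  case True
  have "(1 - qvar ^ Suc k) * (qbinom N k + qvar ^ Suc k * qbinom N (Suc k))
      = (1 - qvar ^ Suc k) * qbinom N k + qvar ^ Suc k * ((1 - qvar ^ Suc k) * qbinom N (Suc k))"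
    by (simp add: algebra_simps del: power_Suc)
  also have "\<dots>
      = (1 - qvar ^ Suc k) * qbinom N k + qvar ^ Suc k * ((1 - qvar ^ (N - k)) * qbinom N k)"
    by (simp only: qbinom_Suc_right)
  also have "\<dots> = (1 - qvar ^ Suc k * qvar ^ (N - k)) * qbinom N k"
    by (simp add: algebra_simps del: power_Suc)
  also have "qvar ^ Suc k * qvar ^ (N - k) = qvar ^ Suc N"
    using True by (simp flip: power_add)
  also have "(1 - qvar ^ Suc N) * qbinom N k = (1 - qvar ^ Suc k) * qbinom (Suc N) (Suc k)"
    by (rule qbinom_absorption[symmetric])
  finally show ?thesis
    by (simp del: power_Suc)
next
  case False
  then show ?thesis
    by (cases "k = N") (simp_all add: qbinom_eq_0)
qed

section \<open>Cyclotomic polynomials\<close>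

lemma coprime_linear_poly:
  fixes p :: "'a::field poly"
  assumes "poly p c \<noteq> 0"
  shows "coprime p [:- c, 1:]"
proof (rule coprimeI)
  fix d
  assume "d dvd p" and "d dvd [:- c, 1:]"
  then have "d dvd [:poly p c:]"
    using synthetic_div_correct'[of c p] by (metis dvd_add_right_iff dvd_mult2)
  moreover have "is_unit [:poly p c:]"
    using assms by (rule is_unit_triv)
  ultimately show "is_unit d"
    by (rule dvd_unit_imp_unit)
qed

lemma prod_linear_factors_dvd:
  fixes r :: "'b \<Rightarrow> 'a::field"
  assumes "finite K" and "inj_on r K" and "\<And>k. k \<in> K \<Longrightarrow> poly p (r k) = 0"
  shows "(\<Prod>k\<in>K. [:- r k, 1:]) dvd p"
  using assms
proof (induction K rule: finite_induct)
  case empty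
  then show ?case by simp
next
  case (insert a K)
  have "(\<Prod>k\<in>K. [:- r k, 1:]) dvd p"
    using insert.prems by (intro insert.IH) auto
  then obtain s where s: "p = (\<Prod>k\<in>K. [:- r k, 1:]) * s"
    by (elim dvdE)
  have "poly (\<Prod>k\<in>K. [:- r k, 1:]) (r a) \<noteq> 0"
    using insert.hyps insert.prems(1) by (auto simp: poly_prod prod_zero_iff)
  moreover have "poly (\<Prod>k\<in>K. [:- r k, 1:]) (r a) * poly s (r a) = 0"
    using insert.prems(2)[of a] unfolding s poly_mult by simp
  ultimately have "[:- r a, 1:] dvd s"
    by (simp add: poly_eq_0_iff_dvd)
  then have "[:- r a, 1:] * (\<Prod>k\<in>K. [:- r k, 1:]) dvd p"
    unfolding s by (metis dvd_refl mult.commute mult_dvd_mono)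
  with insert.hyps show ?case
    by simp
qed

lemma cis_root_power:
  "cis (2 * pi * real k / real n) ^ m = exp (2 * of_real pi * \<i> * of_nat (k * m) / of_nat n)"
proof -
  have "cis (2 * pi * real k / real n) ^ m = cis (real m * (2 * pi * real k / real n))"
    by (rule Complex.DeMoivre)
  also have "\<dots> = exp (\<i> * complex_of_real (real m * (2 * pi * real k / real n)))"
    by (rule cis_conv_exp)
  also have "\<i> * complex_of_real (real m * (2 * pi * real k / real n))
      = 2 * of_real pi * \<i> * of_nat (k * m) / of_nat n"
    by (simp add: field_simps)
  finally show ?thesis .
qed

lemma cis_root_power_eq_1_iff:
  "1 \<le> n \<Longrightarrow> cis (2 * pi * real k / real n) ^ m = 1 \<longleftrightarrow> n dvd k * m"
  unfolding cis_root_power by (rule complex_root_unity_eq_1)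

lemma coprime_cyclotomicI:
  assumes "\<And>k. 1 \<le> k \<Longrightarrow> k \<le> n \<Longrightarrow> coprime k n
    \<Longrightarrow> poly p (cis (2 * pi * real k / real n)) \<noteq> 0"
  shows "coprime p (cyclotomic n)"
  unfolding cyclotomic_def
proof (rule prod_coprime_right)
  fix k
  assume "k \<in> {k \<in> {1..n}. coprime k n}"
  then show "coprime p [:- cis (2 * pi * real k / real n), 1:]"
    using assms by (intro coprime_linear_poly) auto
qed

lemma coprime_x_power_cyclotomic: "coprime ([:0, 1:] ^ j) (cyclotomic n)"
  by (rule coprime_cyclotomicI) simp

lemma coprime_one_minus_x_power_cyclotomic:
  assumes "\<not> n dvd m"
  shows "coprime (1 - [:0, 1:] ^ m) (cyclotomic n)"
proof (rule coprime_cyclotomicI)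
  fix k
  assume "1 \<le> k" "k \<le> n" "coprime k n"
  then have "cis (2 * pi * real k / real n) ^ m \<noteq> 1"
    using assms by (simp add: cis_root_power_eq_1_iff coprime_commute coprime_dvd_mult_right_iff)
  then show "poly (1 - [:0, 1:] ^ m) (cis (2 * pi * real k / real n)) \<noteq> 0"
    by simp
qed

lemma cyclotomic_dvd_x_power_minus_1: "cyclotomic n dvd [:0, 1:] ^ n - 1"
proof (cases "n = 0")
  case False
  have "inj_on (\<lambda>k. cis (2 * pi * real k / real n)) {1..n}"
  proof (rule inj_onI)
    fix j k
    assume jk: "j \<in> {1..n}" "k \<in> {1..n}"
      "cis (2 * pi * real j / real n) = cis (2 * pi * real k / real n)"
    then have "j mod n = k mod n"
      using cis_root_power[of _ n 1] complex_root_unity_eq[of n j k] False by simp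
    moreover have "j mod n = (if j = n then 0 else j)" "k mod n = (if k = n then 0 else k)"
      using jk(1,2) by auto
    ultimately show "j = k"
      using jk(1,2) by (auto split: if_splits)
  qed
  then have "inj_on (\<lambda>k. cis (2 * pi * real k / real n)) {k \<in> {1..n}. coprime k n}"
    by (rule inj_on_subset) auto
  moreover have "poly ([:0, 1:] ^ n - 1) (cis (2 * pi * real k / real n)) = 0" for k
    using cis_root_power_eq_1_iff[of n k n] False by simp
  ultimately show ?thesis
    unfolding cyclotomic_def by (intro prod_linear_factors_dvd) simp_all
qed (simp add: cyclotomic_def)

section \<open>Congruences modulo a cyclotomic polynomial\<close>

definition cyc_regular :: "nat \<Rightarrow> ratfun \<Rightarrow> bool" where
  "cyc_regular n x \<longleftrightarrow> (\<exists>p s. s \<noteq> 0 \<and> coprime s (cyclotomic n) \<and> x = Fract p s)"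

lemma cyc_regular_Fract_1: "cyc_regular n (Fract p 1)"
  unfolding cyc_regular_def by (intro exI[of _ p] exI[of _ 1]) simp

lemma cyc_regularE:
  assumes "cyc_regular n x"
  obtains p s where "s \<noteq> 0" "coprime s (cyclotomic n)" "x = Fract p s"
  using assms unfolding cyc_regular_def by blast

lemma cyc_regular_0: "cyc_regular n 0"
  using cyc_regular_Fract_1[of n 0] by (simp add: Zero_fract_def)

lemma cyc_regular_1: "cyc_regular n 1"
  using cyc_regular_Fract_1[of n 1] by (simp add: One_fract_def)

lemma cyc_regular_add:
  assumes "cyc_regular n x" and "cyc_regular n y"
  shows "cyc_regular n (x + y)"
proof -
  obtain p s p' s' where "s \<noteq> 0" "coprime s (cyclotomic n)" "x = Fract p s"
    and "s' \<noteq> 0" "coprime s' (cyclotomic n)" "y = Fract p' s'"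
    using assms by (elim cyc_regularE)
  then show ?thesis
    unfolding cyc_regular_def by (intro exI[of _ "p * s' + p' * s"] exI[of _ "s * s'"]) simp
qed

lemma cyc_regular_mult:
  assumes "cyc_regular n x" and "cyc_regular n y"
  shows "cyc_regular n (x * y)"
proof -
  obtain p s p' s' where "s \<noteq> 0" "coprime s (cyclotomic n)" "x = Fract p s"
    and "s' \<noteq> 0" "coprime s' (cyclotomic n)" "y = Fract p' s'"
    using assms by (elim cyc_regularE)
  then show ?thesis
    unfolding cyc_regular_def by (intro exI[of _ "p * p'"] exI[of _ "s * s'"]) simp
qed

lemma cyc_regular_uminus: "cyc_regular n x \<Longrightarrow> cyc_regular n (- x)"
  by (elim cyc_regularE) (auto simp: cyc_regular_def)

lemma cyc_regular_qvar_power: "cyc_regular n (qvar ^ j)"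
  by (simp add: qvar_power_Fract cyc_regular_Fract_1)

lemma cyc_regular_inverse_qvar: "cyc_regular n (inverse qvar)"
  unfolding cyc_regular_def qvar_def
  using coprime_x_power_cyclotomic[of 1 n] by (intro exI[of _ 1] exI[of _ "[:0, 1:]"]) simp

lemma cyc_regular_qbinom: "cyc_regular n (qbinom N k)"
proof (induction N arbitrary: k)
  case 0
  then show ?case
    by (cases k) (simp_all add: qbinom_eq_0 cyc_regular_0 cyc_regular_1)
next
  case (Suc N)
  then show ?case
    by (cases k) (simp_all add: qbinom_Suc_Suc cyc_regular_1 cyc_regular_add cyc_regular_mult
        cyc_regular_qvar_power del: power_Suc)
qed

lemma cyc_cong_iff:
  "cyc_cong n A B \<longleftrightarrow> (\<exists>g. cyc_regular n g \<and> A - B = g * Fract (cyclotomic n) 1)"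
  unfolding cyc_cong_def cyc_regular_def by blast

lemma cyc_cong_conv_diff: "cyc_cong n A B \<longleftrightarrow> cyc_cong n (A - B) 0"
  by (simp add: cyc_cong_iff)

lemma cyc_cong_refl [simp]: "cyc_cong n A A"
  unfolding cyc_cong_iff by (intro exI[of _ 0]) (simp add: cyc_regular_0)

lemma cyc_cong_0_add:
  assumes "cyc_cong n A 0" and "cyc_cong n B 0"
  shows "cyc_cong n (A + B) 0"
proof -
  obtain g h where "cyc_regular n g" "A = g * Fract (cyclotomic n) 1"
    and "cyc_regular n h" "B = h * Fract (cyclotomic n) 1"
    using assms by (auto simp: cyc_cong_iff)
  then show ?thesis
    unfolding cyc_cong_iff by (intro exI[of _ "g + h"]) (simp add: cyc_regular_add distrib_right)
qed

lemma cyc_cong_0_mult: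
  assumes "cyc_regular n c" and "cyc_cong n A 0"
  shows "cyc_cong n (c * A) 0"
proof -
  obtain g where "cyc_regular n g" "A = g * Fract (cyclotomic n) 1"
    using assms(2) by (auto simp: cyc_cong_iff)
  with assms(1) show ?thesis
    unfolding cyc_cong_iff by (intro exI[of _ "c * g"]) (simp add: cyc_regular_mult mult.assoc)
qed

lemma cyc_cong_sym:
  assumes "cyc_cong n A B"
  shows "cyc_cong n B A"
proof -
  obtain g where "cyc_regular n g" "A - B = g * Fract (cyclotomic n) 1"
    using assms by (auto simp: cyc_cong_iff)
  then have "cyc_regular n (- g)" "B - A = - g * Fract (cyclotomic n) 1"
    by (simp add: cyc_regular_uminus, metis minus_diff_eq mult_minus_left)
  then show ?thesis
    unfolding cyc_cong_iff by blast
qed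

lemma cyc_cong_trans [trans]: "cyc_cong n A B \<Longrightarrow> cyc_cong n B C \<Longrightarrow> cyc_cong n A C"
  using cyc_cong_0_add[of n "A - B" "B - C"]
  by (simp add: cyc_cong_conv_diff[of n A] cyc_cong_conv_diff[of n B])

lemma cyc_cong_add: "cyc_cong n A B \<Longrightarrow> cyc_cong n C D \<Longrightarrow> cyc_cong n (A + C) (B + D)"
  using cyc_cong_0_add[of n "A - B" "C - D"]
  by (simp add: cyc_cong_conv_diff[of n A] cyc_cong_conv_diff[of n C] cyc_cong_conv_diff[of n "A + C"]
      algebra_simps)

lemma cyc_cong_mult_left:
  assumes "cyc_regular n c" and "cyc_cong n A B"
  shows "cyc_cong n (c * A) (c * B)"
proof -
  have "c * A - c * B = c * (A - B)"
    by (simp add: algebra_simps)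
  with cyc_cong_0_mult[OF assms(1)] assms(2) show ?thesis
    by (simp add: cyc_cong_conv_diff[of n A] cyc_cong_conv_diff[of n "c * A"])
qed

lemma cyc_cong_one_minus_qvar_power: "cyc_cong n (1 - qvar ^ n) 0"
proof -
  obtain h where "[:0, 1:] ^ n - 1 = cyclotomic n * h"
    using cyclotomic_dvd_x_power_minus_1[of n] by (elim dvdE)
  then have "1 - [:0, 1:] ^ n = - h * cyclotomic n"
    by (metis minus_diff_eq mult.commute mult_minus_left)
  then have "1 - qvar ^ n = Fract (- h) 1 * Fract (cyclotomic n) 1"
    by (simp add: qvar_power_Fract One_fract_def)
  then show ?thesis
    unfolding cyc_cong_iff by (metis cyc_regular_Fract_1 diff_zero)
qed

lemma cyc_cong_cancel:
  assumes "c \<noteq> 0" and "coprime c (cyclotomic n)" and "cyc_cong n (Fract c 1 * A) 0"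
  shows "cyc_cong n A 0"
proof -
  obtain p s where ps: "s \<noteq> 0" "coprime s (cyclotomic n)"
    "Fract c 1 * A = Fract p s * Fract (cyclotomic n) 1"
    using assms(3) by (auto simp: cyc_cong_iff cyc_regular_def)
  have "Fract 1 c * Fract c 1 = 1"
    using assms(1) by (simp add: One_fract_def eq_fract)
  then have "A = Fract 1 c * (Fract c 1 * A)"
    by (simp flip: mult.assoc)
  also have "\<dots> = Fract p (c * s) * Fract (cyclotomic n) 1"
    unfolding ps(3) by simp
  finally have "A = Fract p (c * s) * Fract (cyclotomic n) 1" .
  moreover have "cyc_regular n (Fract p (c * s))"
    unfolding cyc_regular_def using ps(1,2) assms(1,2) by (intro exI[of _ p] exI[of _ "c * s"]) simp
  ultimately show ?thesis
    unfolding cyc_cong_iff by auto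
qed

lemma cyc_cong_downward_recurrence:
  fixes f g a b :: "nat \<Rightarrow> ratfun"
  assumes regular: "\<And>d. d + 2 \<le> n \<Longrightarrow> cyc_regular n (a d) \<and> cyc_regular n (b d)"
    and rec_f: "\<And>d. d + 2 \<le> n \<Longrightarrow> cyc_cong n (f d) (a d * f (d + 1) + b d * f (d + 2))"
    and rec_g: "\<And>d. d + 2 \<le> n \<Longrightarrow> cyc_cong n (g d) (a d * g (d + 1) + b d * g (d + 2))"
    and top: "cyc_cong n (f n) (g n)" "cyc_cong n (f (n - 1)) (g (n - 1))"
    and "d \<le> n"
  shows "cyc_cong n (f d) (g d)"
proof -
  have "cyc_cong n (f (n - j)) (g (n - j)) \<and> cyc_cong n (f (n - Suc j)) (g (n - Suc j))" for j
  proof (induction j)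
    case 0
    then show ?case
      using top by simp
  next
    case (Suc j)
    show ?case
    proof (cases "j + 2 \<le> n")
      case True
      define d where "d = n - Suc (Suc j)"
      have d: "d + 2 \<le> n" "n - Suc j = d + 1" "n - j = d + 2"
        using True by (simp_all add: d_def)
      from Suc.IH have IH: "cyc_cong n (f (d + 2)) (g (d + 2))" "cyc_cong n (f (d + 1)) (g (d + 1))"
        unfolding d(2,3) by simp_all
      have "cyc_cong n (f d) (a d * f (d + 1) + b d * f (d + 2))"
        using d(1) by (rule rec_f)
      also have "cyc_cong n \<dots> (a d * g (d + 1) + b d * g (d + 2))"
        using IH regular[OF d(1)] by (intro cyc_cong_add cyc_cong_mult_left) simp_all
      also have "cyc_cong n \<dots> (g d)"
        using rec_g[OF d(1)] by (rule cyc_cong_sym)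
      finally show ?thesis
        using IH(2) by (simp add: d(2) flip: d_def)
    next
      case False
      then have "n - Suc j = 0" "n - Suc (Suc j) = 0"
        by simp_all
      with Suc.IH show ?thesis
        by simp
    qed
  qed
  from this[of "n - d"] show ?thesis
    using \<open>d \<le> n\<close> by simp
qed

lemma cyc_cong_qvar_power_pred:
  assumes "1 \<le> n"
  shows "cyc_cong n (qvar ^ (n - 1)) (inverse qvar)"
proof -
  obtain m where "n = Suc m"
    using assms by (cases n) auto
  then have "inverse qvar - qvar ^ (n - 1) = inverse qvar * (1 - qvar ^ n)"
    by (simp add: algebra_simps)
  with cyc_cong_0_mult[OF cyc_regular_inverse_qvar cyc_cong_one_minus_qvar_power]
  have "cyc_cong n (inverse qvar - qvar ^ (n - 1)) 0"
    by simp
  then show ?thesis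
    by (rule cyc_cong_sym[OF iffD2[OF cyc_cong_conv_diff]])
qed

section \<open>The two sums and their recurrences\<close>

definition poch_sum :: "nat \<Rightarrow> nat \<Rightarrow> nat \<Rightarrow> ratfun" where
  "poch_sum e n d =
    (\<Sum>k<n. qvar ^ k * qbinom (2 * k) (k + d) * qpoch (- (qvar ^ (k + 1))) (n - 1 - k) ^ e)"

lemma qpoch_minus_qvar_power_shift:
  assumes "k < n"
  shows "qpoch (- (qvar ^ (k + 1))) (n - k)
    = (1 + qvar ^ n) * qpoch (- (qvar ^ (k + 1))) (n - 1 - k)"
proof -
  have "n - k = Suc (n - 1 - k)"
    using assms by simp
  moreover have "qvar ^ (k + 1) * qvar ^ (n - 1 - k) = qvar ^ n"
    using assms by (simp only: power_add[symmetric]) simp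
  ultimately show ?thesis
    by (simp only: qpoch_Suc) (simp add: algebra_simps)
qed

lemma poch_sum_Suc:
  "poch_sum e (Suc n) d = (1 + qvar ^ n) ^ e * poch_sum e n d + qvar ^ n * qbinom (2 * n) (n + d)"
proof -
  have "poch_sum e (Suc n) d
      = (\<Sum>k<n. qvar ^ k * qbinom (2 * k) (k + d) * qpoch (- (qvar ^ (k + 1))) (n - k) ^ e)
        + qvar ^ n * qbinom (2 * n) (n + d)"
    by (simp add: poch_sum_def mult_2)
  also have "(\<Sum>k<n. qvar ^ k * qbinom (2 * k) (k + d) * qpoch (- (qvar ^ (k + 1))) (n - k) ^ e)
      = (\<Sum>k<n. (1 + qvar ^ n) ^ e
          * (qvar ^ k * qbinom (2 * k) (k + d) * qpoch (- (qvar ^ (k + 1))) (n - 1 - k) ^ e))"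
    by (rule sum.cong[OF refl])
      (simp only: lessThan_iff qpoch_minus_qvar_power_shift power_mult_distrib mult_ac)
  finally show ?thesis
    by (simp add: poch_sum_def sum_distrib_left)
qed

lemma poch_sum_Suc_0: "poch_sum e (Suc 0) d = qbinom 0 d"
  by (simp add: poch_sum_def)

lemma poch_sum_diag: "poch_sum e n n = 0"
  unfolding poch_sum_def by (rule sum.neutral) (simp add: qbinom_eq_0)

lemma poch_sum_subdiag: "poch_sum e (Suc m) m = qvar ^ m"
proof -
  have "(\<Sum>k<m. qvar ^ k * qbinom (2 * k) (k + m) * qpoch (- (qvar ^ (k + 1))) (m - k) ^ e) = 0"
    by (rule sum.neutral) (simp add: qbinom_eq_0)
  then show ?thesis
    by (simp add: poch_sum_def mult_2)
qed

definition qbinom_pair :: "nat \<Rightarrow> nat \<Rightarrow> ratfun" where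
  "qbinom_pair n d =
    qvar ^ d * qbinom (2 * n - 1) (n + d) + qvar ^ (2 * d + 1) * qbinom (2 * n - 1) (n + d + 1)"

lemma qbinom_pair_factor:
  assumes "1 \<le> n"
  shows "(1 - qvar ^ (n + d + 1)) * qbinom_pair n d
    = qvar ^ d * (1 + qvar ^ (d + 1)) * (1 - qvar ^ n) * qbinom (2 * n - 1) (n + d)"
proof (cases "d < n")
  case True
  then obtain s where n: "n = d + 1 + s"
    using less_imp_Suc_add by fastforce
  \<comment> \<open>Powers of qvar are abstracted to variables, so that algebra sees fixed atoms.\<close>
  have "(1 - Q) * (D * X + E * Y) = D * (1 + D1) * (1 - N) * X"
    if "(1 - Q) * Y = (1 - S) * X" "D * D1 = E" "E * S = M" "D * N = M" "D1 * N = Q"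
    for Q S D D1 E M N X Y :: ratfun
    using that by algebra
  moreover have "(1 - qvar ^ (n + d + 1)) * qbinom (2 * n - 1) (n + d + 1)
      = (1 - qvar ^ s) * qbinom (2 * n - 1) (n + d)"
    using qbinom_Suc_right[of "n + d" "2 * n - 1"] by (simp add: n)
  moreover have "qvar ^ d * qvar ^ (d + 1) = qvar ^ (2 * d + 1)"
    and "qvar ^ (2 * d + 1) * qvar ^ s = qvar ^ (n + d)"
    and "qvar ^ d * qvar ^ n = qvar ^ (n + d)"
    and "qvar ^ (d + 1) * qvar ^ n = qvar ^ (n + d + 1)"
    by (rule power_mult_power_eq, simp add: n)+
  ultimately show ?thesis
    unfolding qbinom_pair_def by blast
next
  case False
  with assms show ?thesis
    by (simp add: qbinom_pair_def qbinom_eq_0)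
qed

lemma qbinom_pair_mult:
  assumes "1 \<le> n"
  shows "(1 + qvar ^ n) * qbinom_pair n d
    = qvar ^ d * (1 + qvar ^ (d + 1)) * qbinom (2 * n) (n + d + 1)"
proof -
  have "(1 - Q) * ((1 + N) * V) = (1 - Q) * (D * (1 + D1) * B)"
    if "(1 - Q) * B = (1 - N2) * X" "N * N = N2" "(1 - Q) * V = D * (1 + D1) * (1 - N) * X"
    for Q N N2 V D D1 B X :: ratfun
    using that by algebra
  moreover have "(1 - qvar ^ (n + d + 1)) * qbinom (2 * n) (n + d + 1)
      = (1 - qvar ^ (2 * n)) * qbinom (2 * n - 1) (n + d)"
    using qbinom_absorption[of "n + d" "2 * n - 1"] assms by simp
  moreover have "qvar ^ n * qvar ^ n = qvar ^ (2 * n)"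
    by (rule power_mult_power_eq) simp
  ultimately have "(1 - qvar ^ (n + d + 1)) * ((1 + qvar ^ n) * qbinom_pair n d)
      = (1 - qvar ^ (n + d + 1)) * (qvar ^ d * (1 + qvar ^ (d + 1)) * qbinom (2 * n) (n + d + 1))"
    using qbinom_pair_factor[OF assms, of d] by blast
  moreover have "1 - qvar ^ (n + d + 1) \<noteq> 0"
    using qvar_power_eq_1_iff[of "n + d + 1"] by auto
  ultimately show ?thesis
    by simp
qed

lemma qbinom_pair_Suc:
  assumes "1 \<le> n"
  shows "qbinom_pair (Suc n) d = (1 + qvar ^ n) * qbinom_pair n d
    + qvar ^ n * qbinom (2 * n) (n + d) + qvar ^ (n + 3 * d + 3) * qbinom (2 * n) (n + d + 2)"
proof -
  define B0 B1 B2 where "B0 = qbinom (2 * n) (n + d)" and "B1 = qbinom (2 * n) (n + d + 1)"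
    and "B2 = qbinom (2 * n) (n + d + 2)"
  have exps: "qvar ^ d * qvar ^ (n + d + 1) = qvar ^ (n + 2 * d + 1)"
    "qvar ^ (2 * d + 1) * qvar ^ (n + d + 2) = qvar ^ (n + 3 * d + 3)"
    "qvar ^ d * qvar ^ (d + 1) = qvar ^ (2 * d + 1)"
    by (rule power_mult_power_eq, simp)+
  have shift: "qvar ^ d * B0 + qvar ^ (n + 2 * d + 1) * B1 = qvar ^ d * B1 + qvar ^ n * B0"
  proof (cases "d \<le> n")
    case True
    then obtain t where n: "n = d + t"
      using le_Suc_ex by blast
    have "D * B0 + Y * B1 = D * B1 + N * B0"
      if "(1 - Q) * B1 = (1 - T) * B0" "D * T = N" "D * Q = Y" for D Q T N Y :: ratfun
      using that by algebra
    moreover have "(1 - qvar ^ (n + d + 1)) * B1 = (1 - qvar ^ t) * B0"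
      using qbinom_Suc_right[of "n + d" "2 * n"] by (simp add: B0_def B1_def n)
    moreover have "qvar ^ d * qvar ^ t = qvar ^ n"
      by (rule power_mult_power_eq) (simp add: n)
    ultimately show ?thesis
      using exps(1) by blast
  next
    case False
    then show ?thesis
      by (simp add: B0_def B1_def qbinom_eq_0)
  qed
  have "V' = (1 + N) * V + N * B0 + Z * B2"
    if "V' = D * (B0 + Q * B1) + E * (B1 + Q2 * B2)" "D * Q = Y" "E * Q2 = Z" "D * D1 = E"
      "D * B0 + Y * B1 = D * B1 + N * B0" "(1 + N) * V = D * (1 + D1) * B1"
    for V' V D D1 E N Q Q2 Y Z :: ratfun
    using that by algebra
  moreover have "qbinom_pair (Suc n) d
      = qvar ^ d * (B0 + qvar ^ (n + d + 1) * B1) + qvar ^ (2 * d + 1) * (B1 + qvar ^ (n + d + 2) * B2)"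
    by (simp add: qbinom_pair_def B0_def B1_def B2_def qbinom_Suc_Suc del: power_Suc)
  ultimately show ?thesis
    using exps shift qbinom_pair_mult[OF assms, of d]
    unfolding B0_def[symmetric] B1_def[symmetric] B2_def[symmetric] by blast
qed

lemma poch_sum1_recurrence:
  "1 \<le> n \<Longrightarrow> poch_sum 1 n d + qvar ^ (3 * d + 3) * poch_sum 1 n (d + 2) = qbinom_pair n d"
proof (induction n arbitrary: d rule: nat_induct_at_least)
  case base
  then show ?case
    by (cases d) (simp_all add: poch_sum_Suc_0 qbinom_pair_def qbinom_eq_0)
next
  case (Suc n)
  have "S' + W * T' = V'"
    if "S' = (1 + N) * S + N * B0" "T' = (1 + N) * T + N * B2" "W * N = Z" "S + W * T = V"
      "V' = (1 + N) * V + N * B0 + Z * B2"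
    for S S' T T' V V' W N Z B0 B2 :: ratfun
    using that by algebra
  moreover have "poch_sum 1 (Suc n) d
      = (1 + qvar ^ n) * poch_sum 1 n d + qvar ^ n * qbinom (2 * n) (n + d)"
    and "poch_sum 1 (Suc n) (d + 2)
      = (1 + qvar ^ n) * poch_sum 1 n (d + 2) + qvar ^ n * qbinom (2 * n) (n + d + 2)"
    by (simp_all only: poch_sum_Suc power_one_right add.assoc)
  moreover have "qvar ^ (3 * d + 3) * qvar ^ n = qvar ^ (n + 3 * d + 3)"
    by (rule power_mult_power_eq) simp
  ultimately show ?case
    using Suc.IH[of d] qbinom_pair_Suc[OF Suc.hyps, of d] by blast
qed

lemma poch_sum2_recurrence:
  "1 \<le> n \<Longrightarrow> poch_sum 2 n d - qvar ^ d * (1 + qvar ^ (d + 1)) * poch_sum 2 n (d + 1)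
    + qvar ^ (3 * d + 3) * poch_sum 2 n (d + 2) = qbinom_pair n d"
proof (induction n arbitrary: d rule: nat_induct_at_least)
  case base
  then show ?case
    by (cases d) (simp_all add: poch_sum_Suc_0 qbinom_pair_def qbinom_eq_0)
next
  case (Suc n)
  have "R' - c * S' + W * T' = V'"
    if "R' = (1 + N) ^ 2 * R + N * B0" "S' = (1 + N) ^ 2 * S + N * B1"
      "T' = (1 + N) ^ 2 * T + N * B2" "W * N = Z" "R - c * S + W * T = V"
      "V' = (1 + N) * V + N * B0 + Z * B2" "(1 + N) * V = c * B1"
    for R R' S S' T T' V V' W N Z c B0 B1 B2 :: ratfun
    using that by algebra
  moreover have "poch_sum 2 (Suc n) d
      = (1 + qvar ^ n) ^ 2 * poch_sum 2 n d + qvar ^ n * qbinom (2 * n) (n + d)"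
    and "poch_sum 2 (Suc n) (d + 1)
      = (1 + qvar ^ n) ^ 2 * poch_sum 2 n (d + 1) + qvar ^ n * qbinom (2 * n) (n + d + 1)"
    and "poch_sum 2 (Suc n) (d + 2)
      = (1 + qvar ^ n) ^ 2 * poch_sum 2 n (d + 2) + qvar ^ n * qbinom (2 * n) (n + d + 2)"
    by (simp_all only: poch_sum_Suc add.assoc)
  moreover have "qvar ^ (3 * d + 3) * qvar ^ n = qvar ^ (n + 3 * d + 3)"
    by (rule power_mult_power_eq) simp
  ultimately show ?case
    using Suc.IH[of d] qbinom_pair_Suc[OF Suc.hyps, of d] qbinom_pair_mult[OF Suc.hyps, of d]
    by blast
qed

lemma qbinom_pair_cong_0:
  assumes "d + 2 \<le> n"
  shows "cyc_cong n (qbinom_pair n d) 0"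
proof (rule cyc_cong_cancel[where c = "1 - [:0, 1:] ^ (n + d + 1)"])
  show "1 - [:0, 1:] ^ (n + d + 1) \<noteq> (0 :: complex poly)"
    unfolding one_minus_x_power_eq_0_iff by simp
  have "\<not> n dvd d + 1"
    using assms by (auto dest: dvd_imp_le)
  then have "\<not> n dvd n + d + 1"
    by (simp only: add.assoc dvd_add_right_iff[OF dvd_refl] not_False_eq_True)
  then show "coprime (1 - [:0, 1:] ^ (n + d + 1)) (cyclotomic n)"
    by (rule coprime_one_minus_x_power_cyclotomic)
  have "Fract (1 - [:0, 1:] ^ (n + d + 1)) 1 * qbinom_pair n d
      = qvar ^ d * (1 + qvar ^ (d + 1)) * qbinom (2 * n - 1) (n + d) * (1 - qvar ^ n)"
    unfolding Fract_one_minus_x_power using qbinom_pair_factor[of n d] assms by (simp add: ac_simps)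
  moreover have "cyc_regular n (qvar ^ d * (1 + qvar ^ (d + 1)) * qbinom (2 * n - 1) (n + d))"
    by (intro cyc_regular_mult cyc_regular_add cyc_regular_1 cyc_regular_qvar_power
        cyc_regular_qbinom)
  ultimately show "cyc_cong n (Fract (1 - [:0, 1:] ^ (n + d + 1)) 1 * qbinom_pair n d) 0"
    by (metis cyc_cong_0_mult cyc_cong_one_minus_qvar_power)
qed

section \<open>The closed forms\<close>

definition chi4 :: "int \<Rightarrow> ratfun" where
  "chi4 r = (if r mod 4 = 1 then 1 else if r mod 4 = 3 then - 1 else 0)"

lemma chi4_diff_cases:
  shows "a mod 2 = b mod 2 \<Longrightarrow> chi4 (a - b) = 0"
    and "a mod 4 = (b + 1) mod 4 \<Longrightarrow> chi4 (a - b) = 1"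
    and "a mod 4 = (b - 1) mod 4 \<Longrightarrow> chi4 (a - b) = - 1"
proof -
  assume "a mod 2 = b mod 2"
  then have "(a - b) mod 4 \<noteq> 1" "(a - b) mod 4 \<noteq> 3"
    by presburger+
  then show "chi4 (a - b) = 0"
    by (simp add: chi4_def)
next
  assume "a mod 4 = (b + 1) mod 4"
  then have "(a - b) mod 4 = 1"
    by presburger
  then show "chi4 (a - b) = 1"
    by (simp add: chi4_def)
next
  assume "a mod 4 = (b - 1) mod 4"
  then have "(a - b) mod 4 = 3"
    by presburger
  then show "chi4 (a - b) = - 1"
    by (simp add: chi4_def)
qed

lemma chi4_minus_2: "chi4 (r - 2) = - chi4 r"
proof -
  have "(r - 2) mod 4 = 1 \<longleftrightarrow> r mod 4 = 3" and "(r - 2) mod 4 = 3 \<longleftrightarrow> r mod 4 = 1"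
    by presburger+
  then show ?thesis
    by (auto simp: chi4_def)
qed

definition poch_sum1_closed :: "nat \<Rightarrow> nat \<Rightarrow> ratfun" where
  "poch_sum1_closed n d = chi4 (int n - int d) * qvar powi (3 * ((int n - 1)^2 - (int d)^2) div 4 - 1)"

lemma poch_sum1_closed_recurrence:
  "poch_sum1_closed n d = - (qvar ^ (3 * d + 3)) * poch_sum1_closed n (d + 2)"
proof -
  have "3 * ((int n - 1)^2 - (int d)^2)
      = 3 * ((int n - 1)^2 - (int (d + 2))^2) + int (3 * d + 3) * 4"
    by (simp add: algebra_simps power2_eq_square)
  then have "3 * ((int n - 1)^2 - (int d)^2) div 4 - 1
      = int (3 * d + 3) + (3 * ((int n - 1)^2 - (int (d + 2))^2) div 4 - 1)"
    by simp
  note exponent_eq = this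
  have exponent: "qvar powi (3 * ((int n - 1)^2 - (int d)^2) div 4 - 1)
      = qvar ^ (3 * d + 3) * qvar powi (3 * ((int n - 1)^2 - (int (d + 2))^2) div 4 - 1)"
    by (simp only: exponent_eq qvar_powi_add power_int_of_nat)
  have "int n - int (d + 2) = (int n - int d) - 2"
    by simp
  then have sign: "chi4 (int n - int (d + 2)) = - chi4 (int n - int d)"
    by (simp only: chi4_minus_2)
  show ?thesis
    unfolding poch_sum1_closed_def exponent sign by simp
qed

lemma poch_sum1_closed_diag: "poch_sum1_closed n n = 0"
  by (simp add: poch_sum1_closed_def chi4_def)

lemma poch_sum1_closed_subdiag: "1 \<le> n \<Longrightarrow> poch_sum1_closed n (n - 1) = inverse qvar"
  by (simp add: poch_sum1_closed_def chi4_def of_nat_diff)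

definition poch_sum2_closed :: "nat \<Rightarrow> nat \<Rightarrow> ratfun" where
  "poch_sum2_closed n d =
    (\<Sum>k\<in>{d+1..n}. qvar powi (int (n choose 2) + int (k choose 2) - (int d)^2))"

lemma poch_sum2_closed_eq:
  "poch_sum2_closed n d
    = qvar powi (int (n choose 2) - (int d)^2) * (\<Sum>k\<in>{d+1..n}. qvar ^ (k choose 2))"
  unfolding poch_sum2_closed_def sum_distrib_left
proof (rule sum.cong[OF refl])
  fix k
  have "int (n choose 2) + int (k choose 2) - (int d)^2
      = (int (n choose 2) - (int d)^2) + int (k choose 2)"
    by simp
  note exponent_eq = this
  show "qvar powi (int (n choose 2) + int (k choose 2) - (int d)^2)
      = qvar powi (int (n choose 2) - (int d)^2) * qvar ^ (k choose 2)"
    unfolding exponent_eq qvar_powi_add by simp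
qed

lemma poch_sum2_closed_recurrence:
  assumes "d + 2 \<le> n"
  shows "poch_sum2_closed n d = qvar ^ d * (1 + qvar ^ (d + 1)) * poch_sum2_closed n (d + 1)
    + - (qvar ^ (3 * d + 3)) * poch_sum2_closed n (d + 2)"
proof -
  define E where "E = qvar powi (int (n choose 2) - (int (d + 2))^2)"
  define A where "A = qvar ^ ((d + 1) choose 2)"
  define T where "T = (\<Sum>k\<in>{d + 2 + 1..n}. qvar ^ (k choose 2))"
  have "Suc (Suc d) choose 2 = (Suc d choose 2) + Suc d"
    by (simp add: numeral_2_eq_2)
  then have sum2: "(\<Sum>k\<in>{d + 1 + 1..n}. qvar ^ (k choose 2)) = A * qvar ^ (d + 1) + T"
    using assms by (simp add: T_def A_def sum.atLeast_Suc_atMost power_add)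
  then have sum1: "(\<Sum>k\<in>{d + 1..n}. qvar ^ (k choose 2)) = A + (A * qvar ^ (d + 1) + T)"
    using assms by (simp add: A_def sum.atLeast_Suc_atMost)
  have "int (n choose 2) - (int d)^2 = int (4 * d + 4) + (int (n choose 2) - (int (d + 2))^2)"
    and "int (n choose 2) - (int (d + 1))^2
      = int (2 * d + 3) + (int (n choose 2) - (int (d + 2))^2)"
    by (simp_all add: algebra_simps power2_eq_square)
  then have exps: "qvar powi (int (n choose 2) - (int d)^2) = qvar ^ (4 * d + 4) * E"
    "qvar powi (int (n choose 2) - (int (d + 1))^2) = qvar ^ (2 * d + 3) * E"
    unfolding E_def by (simp_all only: qvar_powi_add power_int_of_nat)
  have "qvar ^ d * qvar ^ (2 * d + 3) = qvar ^ (3 * d + 3)"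
    and "qvar ^ (3 * d + 3) * qvar ^ (d + 1) = qvar ^ (4 * d + 4)"
    by (rule power_mult_power_eq, simp)+
  note exps' = this[symmetric]
  have "D * P * Q1 * E * (A + (A * Q1 + T))
      = D * (1 + Q1) * (P * E * (A * Q1 + T)) + - (D * P) * (E * T)"
    for D P Q1 :: ratfun
    by (simp add: algebra_simps)
  then show ?thesis
    unfolding poch_sum2_closed_eq sum1 sum2 exps T_def[symmetric] E_def[symmetric] exps' .
qed

lemma poch_sum2_closed_diag: "poch_sum2_closed n n = 0"
  by (simp add: poch_sum2_closed_def)

lemma poch_sum2_closed_subdiag: "poch_sum2_closed (Suc m) m = qvar ^ m"
proof -
  have "2 * (Suc m choose 2) = Suc m * m"
    by (simp add: choose_two)
  then have "int (Suc m choose 2) + int (Suc m choose 2) - (int m)^2 = int m"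
    by (simp add: power2_eq_square algebra_simps flip: of_nat_mult of_nat_add)
  then show ?thesis
    by (simp add: poch_sum2_closed_def)
qed

lemma poch_sum1_cong:
  assumes "1 \<le> n" and "d \<le> n"
  shows "cyc_cong n (poch_sum 1 n d) (poch_sum1_closed n d)"
proof (rule cyc_cong_downward_recurrence[where a = "\<lambda>_. 0"
      and b = "\<lambda>d. - (qvar ^ (3 * d + 3))"])
  show "cyc_regular n 0 \<and> cyc_regular n (- (qvar ^ (3 * d + 3)))" for d
    by (intro conjI cyc_regular_0 cyc_regular_uminus cyc_regular_qvar_power)
  show "cyc_cong n (poch_sum 1 n d)
      (0 * poch_sum 1 n (d + 1) + - (qvar ^ (3 * d + 3)) * poch_sum 1 n (d + 2))"
    if "d + 2 \<le> n" for d
  proof -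
    have "poch_sum 1 n d - (0 * poch_sum 1 n (d + 1) + - (qvar ^ (3 * d + 3)) * poch_sum 1 n (d + 2))
        = qbinom_pair n d"
      using poch_sum1_recurrence[OF assms(1), of d] by simp
    with qbinom_pair_cong_0[OF that] show ?thesis
      by (simp only: cyc_cong_conv_diff[of n "poch_sum 1 n d"])
  qed
  show "cyc_cong n (poch_sum1_closed n d)
      (0 * poch_sum1_closed n (d + 1) + - (qvar ^ (3 * d + 3)) * poch_sum1_closed n (d + 2))"
    for d
    using poch_sum1_closed_recurrence[of n d] by simp
  show "cyc_cong n (poch_sum 1 n n) (poch_sum1_closed n n)"
    by (simp add: poch_sum_diag poch_sum1_closed_diag)
  obtain m where "n = Suc m"
    using assms(1) by (cases n) auto
  then show "cyc_cong n (poch_sum 1 n (n - 1)) (poch_sum1_closed n (n - 1))"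
    using cyc_cong_qvar_power_pred[OF assms(1)] poch_sum1_closed_subdiag[OF assms(1)]
    by (simp add: poch_sum_subdiag)
qed (rule assms(2))

lemma poch_sum2_cong:
  assumes "1 \<le> n" and "d \<le> n"
  shows "cyc_cong n (poch_sum 2 n d) (poch_sum2_closed n d)"
proof (rule cyc_cong_downward_recurrence[where a = "\<lambda>d. qvar ^ d * (1 + qvar ^ (d + 1))"
      and b = "\<lambda>d. - (qvar ^ (3 * d + 3))"])
  show "cyc_regular n (qvar ^ d * (1 + qvar ^ (d + 1))) \<and> cyc_regular n (- (qvar ^ (3 * d + 3)))"
    for d
    by (intro conjI cyc_regular_mult cyc_regular_add cyc_regular_1 cyc_regular_uminus
        cyc_regular_qvar_power)
  show "cyc_cong n (poch_sum 2 n d)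
      (qvar ^ d * (1 + qvar ^ (d + 1)) * poch_sum 2 n (d + 1)
        + - (qvar ^ (3 * d + 3)) * poch_sum 2 n (d + 2))"
    if "d + 2 \<le> n" for d
  proof -
    have "poch_sum 2 n d - (qvar ^ d * (1 + qvar ^ (d + 1)) * poch_sum 2 n (d + 1)
        + - (qvar ^ (3 * d + 3)) * poch_sum 2 n (d + 2)) = qbinom_pair n d"
      using poch_sum2_recurrence[OF assms(1), of d] by (simp add: algebra_simps)
    with qbinom_pair_cong_0[OF that] show ?thesis
      by (simp only: cyc_cong_conv_diff[of n "poch_sum 2 n d"])
  qed
  show "cyc_cong n (poch_sum2_closed n d)
      (qvar ^ d * (1 + qvar ^ (d + 1)) * poch_sum2_closed n (d + 1)
        + - (qvar ^ (3 * d + 3)) * poch_sum2_closed n (d + 2))"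
    if "d + 2 \<le> n" for d
    using poch_sum2_closed_recurrence[OF that] by simp
  show "cyc_cong n (poch_sum 2 n n) (poch_sum2_closed n n)"
    by (simp add: poch_sum_diag poch_sum2_closed_diag)
  obtain m where "n = Suc m"
    using assms(1) by (cases n) auto
  then show "cyc_cong n (poch_sum 2 n (n - 1)) (poch_sum2_closed n (n - 1))"
    by (simp add: poch_sum_subdiag poch_sum2_closed_subdiag)
qed (rule assms(2))

theorem corollary1p2:
  fixes n d :: nat
  assumes "n \<ge> 1" and "d \<le> n - 1"
  shows "(int n mod 2 = int d mod 2 \<longrightarrow>
            cyc_cong n (\<Sum>k<n. qvar ^ k * qbinom (2 * k) (k + d) * qpoch (- (qvar ^ (k + 1))) (n - 1 - k)) 0)
       \<and> (int n mod 4 = (int d + 1) mod 4 \<longrightarrow>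
            cyc_cong n (\<Sum>k<n. qvar ^ k * qbinom (2 * k) (k + d) * qpoch (- (qvar ^ (k + 1))) (n - 1 - k))
              (qvar powi (3 * ((int n - 1)^2 - (int d)^2) div 4 - 1)))
       \<and> (int n mod 4 = (int d - 1) mod 4 \<longrightarrow>
            cyc_cong n (\<Sum>k<n. qvar ^ k * qbinom (2 * k) (k + d) * qpoch (- (qvar ^ (k + 1))) (n - 1 - k))
              (- (qvar powi (3 * ((int n - 1)^2 - (int d)^2) div 4 - 1))))
       \<and> cyc_cong n (\<Sum>k<n. qvar ^ k * qbinom (2 * k) (k + d) * (qpoch (- (qvar ^ (k + 1))) (n - 1 - k))^2)
              (\<Sum>k\<in>{d+1..n}. qvar powi (int (n choose 2) + int (k choose 2) - (int d)^2))"
proof -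
  have "d \<le> n"
    using assms(2) by simp
  with assms(1) have "cyc_cong n (poch_sum 1 n d) (poch_sum1_closed n d)"
    and "cyc_cong n (poch_sum 2 n d) (poch_sum2_closed n d)"
    by (rule poch_sum1_cong, rule poch_sum2_cong)
  moreover have "(\<Sum>k<n. qvar ^ k * qbinom (2 * k) (k + d) * qpoch (- (qvar ^ (k + 1))) (n - 1 - k))
      = poch_sum 1 n d"
    and "(\<Sum>k<n. qvar ^ k * qbinom (2 * k) (k + d) * (qpoch (- (qvar ^ (k + 1))) (n - 1 - k))^2)
      = poch_sum 2 n d"
    by (simp_all add: poch_sum_def)
  ultimately show ?thesis
    using chi4_diff_cases[of "int n" "int d"]
    by (auto simp: poch_sum1_closed_def poch_sum2_closed_def)
qed

end
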